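(* Let $S$ be an instance of SCS-RC, let $T$ be the set computed by \textsf{MGREEDY-RC} on $S$, and let $\mathcal C$ be the cycle cover of $G_S$ produced by \textsf{MGREEDY-RC}. For each cycle $C\in\mathcal C$ let $x_C$ be a string satisfying properties (1)–(4) below, and let $A=\{x_C : C\in\mathcal C\}$. Then $\|T\| \le \|A\|$, where $\|T\|=\sum_{t\in T}|t|$ and $\|A\|=\sum_{C\in\mathcal C}|x_C|$.
   Context: Alphabet $\Sigma=\{\texttt a,\texttt t,\texttt g,\texttt c\}$ with complement $\bar{\texttt a}=\texttt t$, $\bar{\texttt t}=\texttt a$, $\bar{\texttt g}=\texttt c$, $\bar{\texttt c}=\texttt g$; the reverse complement of $s=b_1\cdots b_n$ is $\bar{s}^R=\bar{b_n}\cdots\bar{b_1}$, and $\bar S^R=\{\bar s^R: s\in S\}$. An instance of SCS-RC is a finite set $S=\{s_1,\dots,s_m\}$ of strings over $\Sigma$ such that no string of $S\cup\bar S^R$ is a substring of another. For strings $x,y$, $\mathrm{ov}(x,y)$ is the length of the longest $v$ with $x=uv$, $y=vw$ for nonempty $u,w$; $\mathrm{pref}(x,y)=u$; $\mathrm{dist}(x,y)=|x|-\mathrm{ov}(x,y)$; $\langle x_1,\dots,x_r\rangle=\mathrm{pref}(x_1,x_2)\cdots\mathrm{pref}(x_{r-1},x_r)\,x_r$. The distance graph $G_S$ is the complete directed graph (with loops) on $S\cup\bar S^R$ with edge weights $\mathrm{dist}$; a cycle $z_1,\dots,z_r,z_1$ (distinct vertices) has weight $w(C)=\sum_i\mathrm{dist}(z_i,z_{i+1})$,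 $z_{r+1}=z_1$; a cycle cover contains, as vertex-disjoint cycles, exactly one of $s_i,\bar{s_i}^R$ for each $i$. \textsf{MGREEDY-RC} on $S$: set $T=\emptyset$; while $S\ne\emptyset$: among pairs $(x,y)\in (S\cup\bar S^R)^2$ with $x=y$, or with $x\ne y$ and $\bar x^R\ne y$, pick one maximizing $\mathrm{ov}(x,y)$ (ties arbitrary); if $x=y$, remove $x,\bar x^R$ from $S$ and add $x$ to $T$; otherwise remove $x,\bar x^R,y,\bar y^R$ from $S$ and add $\langle x,y\rangle$. Each current string $z$ is associated with a sequence $(z_1,\dots,z_h)$ of vertices of $G_S$ with $z=\langle z_1,\dots,z_h\rangle$: initially $s_i\leftrightarrow(s_i)$; $\bar z^R\leftrightarrow(\bar{z_h}^R,\dots,\bar{z_1}^R)$; a merged string $\langle x,y\rangle$ is associated with the concatenation of the sequences of $x$ and $y$; when $z$ with sequence $(z_1,\dots,z_h)$ is moved to $T$, the cycle $z_1,\dots,z_h,z_1$ is formed. These cycles form the cycle cover $\mathcal C$ (which is an optimal cycle cover), and $T$ consists of the strings $\langle z_1,\dots,z_h\rangle$ for the cycles $z_1,\dots,z_h,z_1\in\mathcal C$. Periodicity: for a finite string $s$, $\mathrm{factor}(s)$ is the shortest $x$ with $s=x^iy$, $i\ge1$, $y$ a (possibly empty) prefix of $x$; for a semi-infinite string $s$ with $s=xs$ for some nonempty $x$ ($s$ periodic), $\mathrm{factor}(s)$ is the shortest such $x$; $\mathrm{period}(s)=|\mathrm{factor}(s)|$. Strings (finite or periodic semi-infinite) $x,y$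 are equivalent if $\mathrm{factor}(x)=pq$, $\mathrm{factor}(y)=qp$ for some $p,q$, inequivalent otherwise. For semi-infinite $\alpha=c_1c_2\cdots$, $\alpha[k]=c_kc_{k+1}\cdots$; for finite $s$, $\mathrm{ov}(s,\alpha[k])$ is the length of the longest $v$ with $s=uv$, $u$ nonempty, $v$ a prefix of $\alpha[k]$. $\alpha[k]$ is a critical rotation of a periodic semi-infinite $\alpha$ if $\mathrm{ov}(s,\alpha[k])\le\mathrm{period}(s)+\tfrac12\mathrm{period}(\alpha)$ for every finite $s$ inequivalent to $\alpha$. Properties of $x_C$, for the cycle $C=z_1,\dots,z_r,z_1$ with $\langle z_1,\dots,z_r\rangle\in T$: there is an index $j\in\{1,\dots,r\}$ such that (1) $\langle z_{j+1},\dots,z_r,z_1,\dots,z_j\rangle$ is a suffix of $x_C$; (2) $x_C$ is a substring of $y_C=\langle z_j,\dots,z_r,z_1,\dots,z_j\rangle$; (3) $x_C$ is equivalent to $\langle z_{j+1},\dots,z_r,z_1,\dots,z_j\rangle$; (4) $\mathrm{factor}(x_C)^\infty$ is a critical rotation of $\mathrm{factor}(\langle z_1,\dots,z_r\rangle)^\infty$. (Such strings are known to exist.) *)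

theory Defs
  imports Complex_Main "HOL-Library.Sublist"
begin

datatype base = Ba | Bt | Bg | Bc

fun comp :: "base \<Rightarrow> base" where
  "comp Ba = Bt" | "comp Bt = Ba" | "comp Bg = Bc" | "comp Bc = Bg"

type_synonym dna = "base list"

definition rc :: "dna \<Rightarrow> dna" where
  "rc s = rev (map comp s)"

definition ov :: "dna \<Rightarrow> dna \<Rightarrow> nat" where
  "ov x y = Max {k. k < length x \<and> k < length y \<and> drop (length x - k) x = take k y}"

definition pref :: "dna \<Rightarrow> dna \<Rightarrow> dna" where
  "pref x y = take (length x - ov x y) x"

definition dist :: "dna \<Rightarrow> dna \<Rightarrow> nat" where
  "dist x y = length x - ov x y"

fun merge :: "dna list \<Rightarrow> dna" where
  "merge [] = []"
| "merge [x] = x"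
| "merge (x # y # xs) = pref x y @ merge (y # xs)"

definition scs_rc_instance :: "dna set \<Rightarrow> bool" where
  "scs_rc_instance S \<longleftrightarrow> finite S \<and>
     (\<forall>a \<in> S \<union> rc ` S. \<forall>b \<in> S \<union> rc ` S. a \<noteq> b \<longrightarrow> \<not> sublist a b)"

text \<open>A current string is represented by its associated sequence of vertices of G_S;
  the sequence associated with the reverse complement is rcseq.\<close>
definition rcseq :: "dna list \<Rightarrow> dna list" where
  "rcseq p = rev (map rc p)"

text \<open>The state set Q contains the sequences of the current strings together with those
  of their reverse complements (i.e. it represents S \<union> rc S).\<close>
definition allowed :: "dna list set \<Rightarrow> dna list \<Rightarrow> dna list \<Rightarrow> bool" where
  "allowed Q p q \<longleftrightarrow> p \<in> Q \<and> q \<in> Q \<and> (p = q \<or> (p \<noteq> q \<and> rcseq p \<noteq> q))"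

definition maximal_pair :: "dna list set \<Rightarrow> dna list \<Rightarrow> dna list \<Rightarrow> bool" where
  "maximal_pair Q p q \<longleftrightarrow> allowed Q p q \<and>
     (\<forall>p' q'. allowed Q p' q' \<longrightarrow> ov (merge p') (merge q') \<le> ov (merge p) (merge q))"

text \<open>One step of MGREEDY-RC on states (Q, cycles found so far); ties are arbitrary.\<close>
inductive mg_step :: "dna list set \<times> dna list list \<Rightarrow> dna list set \<times> dna list list \<Rightarrow> bool" where
  self: "maximal_pair Q p p \<Longrightarrow> mg_step (Q, cs) (Q - {p, rcseq p}, cs @ [p])"
| join: "maximal_pair Q p q \<Longrightarrow> p \<noteq> q \<Longrightarrow>
     mg_step (Q, cs) ((Q - {p, rcseq p, q, rcseq q}) \<union> {p @ q, rcseq (p @ q)}, cs)"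

definition mg_init :: "dna set \<Rightarrow> dna list set" where
  "mg_init S = (\<lambda>s. [s]) ` (S \<union> rc ` S)"

text \<open>cs is the list of cycles (z_1,...,z_h) of the cycle cover produced by some run of
  MGREEDY-RC on S; T consists of the strings merge c for c in cs.\<close>
definition mgreedy_run :: "dna set \<Rightarrow> dna list list \<Rightarrow> bool" where
  "mgreedy_run S cs \<longleftrightarrow> mg_step\<^sup>*\<^sup>* (mg_init S, []) ({}, cs)"

definition factor :: "dna \<Rightarrow> dna" where
  "factor s = take (LEAST k. \<exists>i y. i \<ge> 1 \<and> s = concat (replicate i (take k s)) @ y
                                  \<and> prefix y (take k s)) s"

definition period :: "dna \<Rightarrow> nat" where
  "period s = length (factor s)"

type_synonym inf_dna = "nat \<Rightarrow> base"

definition periodic :: "inf_dna \<Rightarrow> bool" where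
  "periodic \<alpha> \<longleftrightarrow> (\<exists>n>0. \<forall>i. \<alpha> (i + n) = \<alpha> i)"

definition period_inf :: "inf_dna \<Rightarrow> nat" where
  "period_inf \<alpha> = (LEAST n. n > 0 \<and> (\<forall>i. \<alpha> (i + n) = \<alpha> i))"

definition factor_inf :: "inf_dna \<Rightarrow> dna" where
  "factor_inf \<alpha> = map \<alpha> [0..<period_inf \<alpha>]"

definition inf_pow :: "dna \<Rightarrow> inf_dna" where
  "inf_pow x = (\<lambda>n. x ! (n mod length x))"

definition equiv_fin :: "dna \<Rightarrow> dna \<Rightarrow> bool" where
  "equiv_fin s t \<longleftrightarrow> (\<exists>p q. factor s = p @ q \<and> factor t = q @ p)"

definition equiv_fin_inf :: "dna \<Rightarrow> inf_dna \<Rightarrow> bool" where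
  "equiv_fin_inf s \<alpha> \<longleftrightarrow> (\<exists>p q. factor s = p @ q \<and> factor_inf \<alpha> = q @ p)"

definition ov_inf :: "dna \<Rightarrow> inf_dna \<Rightarrow> nat" where
  "ov_inf s \<beta> = Max {l. l < length s \<and> (\<forall>i<l. s ! (length s - l + i) = \<beta> i)}"

definition critical_rotation :: "inf_dna \<Rightarrow> inf_dna \<Rightarrow> bool" where
  "critical_rotation \<beta> \<alpha> \<longleftrightarrow> periodic \<alpha> \<and> (\<exists>k. \<beta> = (\<lambda>n. \<alpha> (n + k))) \<and>
     (\<forall>s. \<not> equiv_fin_inf s \<alpha> \<longrightarrow>
        real (ov_inf s \<beta>) \<le> real (period s) + real (period_inf \<alpha>) / 2)"

definition xC_props :: "dna list \<Rightarrow> dna \<Rightarrow> bool" where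
  "xC_props c x \<longleftrightarrow> (\<exists>j. 1 \<le> j \<and> j \<le> length c \<and>
      suffix (merge (drop j c @ take j c)) x \<and>
      sublist x (merge (drop (j - 1) c @ take j c)) \<and>
      equiv_fin x (merge (drop j c @ take j c)) \<and>
      critical_rotation (inf_pow (factor x)) (inf_pow (factor (merge c))))"

end

theory Submission
  imports Defs
begin

(*
  Let z_1, ..., z_r be a cycle produced by MGREEDY-RC. Its closing pair (z_r, z_1) overlaps
  least among the consecutive pairs of the cycle: the pairs inside the cycle were joined by
  earlier greedy steps, while the cycle was closed only when no allowed pair overlapped more.
  The length of <z_1, ..., z_r> is the total length of the vertices minus the overlaps of the
  consecutive pairs, so passing to the rotation <z_(j+1), ..., z_j> trades the overlap of
  (z_j, z_(j+1)) for the smaller one of (z_r, z_1) and can only make the string longer; by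
  property (1) that rotation is a suffix of x_C.

  The greedy rule compares overlaps of merged strings rather than of vertices. Since no vertex
  is a substring of another, two merged strings can overlap by more than their end vertices
  only if an end vertex of one straddles a junction inside the other and overlaps the vertex
  after the junction more than the vertex before it does. The run keeps every junction at
  least as overlapping as any foreign end vertex, which excludes this.
*)

section \<open>Reverse complements\<close>

lemma comp_comp [simp]: "comp (comp b) = b"
  by (cases b) auto

lemma rc_rc [simp]: "rc (rc s) = s"
  by (simp add: rc_def rev_map o_def)

lemma rc_eq_iff [simp]: "rc u = rc v \<longleftrightarrow> u = v"
  by (metis rc_rc)

lemma rc_in_image_rc_iff [simp]: "rc x \<in> rc ` A \<longleftrightarrow> x \<in> A"
  by (metis image_iff rc_eq_iff)

lemma length_rc [simp]: "length (rc s) = length s"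
  by (simp add: rc_def)

lemma rc_Nil_iff [simp]: "rc s = [] \<longleftrightarrow> s = []"
  by (simp add: rc_def)

lemma drop_rc: "drop k (rc x) = rc (take (length x - k) x)"
  by (simp add: rc_def drop_rev take_map)

lemma take_rc: "take k (rc x) = rc (drop (length x - k) x)"
  by (simp add: rc_def take_rev drop_map)

lemma sublist_rc: "sublist a b \<Longrightarrow> sublist (rc a) (rc b)"
  unfolding rc_def by (simp add: map_mono_sublist)

lemma sublist_rc_iff [simp]: "sublist (rc a) (rc b) \<longleftrightarrow> sublist a b"
  by (metis rc_rc sublist_rc)

lemma rcseq_rcseq [simp]: "rcseq (rcseq X) = X"
  by (simp add: rcseq_def rev_map o_def)

lemma rcseq_eq_iff_swap: "rcseq X = Y \<longleftrightarrow> X = rcseq Y"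
  by auto

lemma rcseq_append: "rcseq (p @ q) = rcseq q @ rcseq p"
  by (simp add: rcseq_def)

lemma set_rcseq [simp]: "set (rcseq X) = rc ` set X"
  by (simp add: rcseq_def)

lemma rcseq_Nil_iff [simp]: "rcseq X = [] \<longleftrightarrow> X = []"
  by (simp add: rcseq_def)

lemma hd_rcseq: "X \<noteq> [] \<Longrightarrow> hd (rcseq X) = rc (last X)"
  by (simp add: rcseq_def hd_rev last_map)

lemma last_rcseq: "X \<noteq> [] \<Longrightarrow> last (rcseq X) = rc (hd X)"
  by (simp add: rcseq_def last_rev hd_map)

section \<open>Overlaps and merges\<close>

lemma finite_overlaps: "finite {k. k < length x \<and> k < length y \<and> drop (length x - k) x = take k y}"
  by (rule finite_subset[of _ "{..<length x}"]) auto

text \<open>Overlaps with an empty string are junk (ov is then Max of the empty set), hence the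
  nonemptiness hypotheses throughout.\<close>
lemma ov_is_overlap:
  assumes "x \<noteq> []" "y \<noteq> []"
  shows "ov x y < length x" "ov x y < length y" "drop (length x - ov x y) x = take (ov x y) y"
proof -
  have "0 \<in> {k. k < length x \<and> k < length y \<and> drop (length x - k) x = take k y}"
    using assms by simp
  then have "ov x y \<in> {k. k < length x \<and> k < length y \<and> drop (length x - k) x = take k y}"
    unfolding ov_def using finite_overlaps by (intro Max_in) auto
  then show "ov x y < length x" "ov x y < length y" "drop (length x - ov x y) x = take (ov x y) y"
    by simp_all
qed

lemma ov_ge:
  assumes "k < length x" "k < length y" "drop (length x - k) x = take k y"
  shows "k \<le> ov x y"
  unfolding ov_def using assms finite_overlaps by (intro Max_ge) auto

lemma ov_rc: "ov (rc x) (rc y) = ov y x"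
proof -
  have "k < length x \<and> k < length y \<and> drop (length x - k) (rc x) = take k (rc y) \<longleftrightarrow>
        k < length y \<and> k < length x \<and> drop (length y - k) y = take k x" for k
    by (auto simp: drop_rc take_rc)
  then show ?thesis
    unfolding ov_def by simp
qed

lemma ov_suffix_prefix_le:
  assumes "suffix a A" "prefix b B" "a \<noteq> []" "b \<noteq> []"
  shows "ov a b \<le> ov A B"
proof -
  obtain A0 where A: "A = A0 @ a" using assms(1) by (auto simp: suffix_def)
  obtain B0 where B: "B = b @ B0" using assms(2) by (auto simp: prefix_def)
  note k = ov_is_overlap[OF assms(3,4)]
  show ?thesis
  proof (rule ov_ge)
    show "ov a b < length A" "ov a b < length B" using k A B by auto
    show "drop (length A - ov a b) A = take (ov a b) B" using k A B by simp
  qed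
qed

lemma pref_append_take_ov: "x \<noteq> [] \<Longrightarrow> y \<noteq> [] \<Longrightarrow> pref x y @ take (ov x y) y = x"
  using ov_is_overlap[of x y] unfolding pref_def by (metis append_take_drop_id)

lemma length_pref: "x \<noteq> [] \<Longrightarrow> y \<noteq> [] \<Longrightarrow> length (pref x y) = length x - ov x y"
  using ov_is_overlap[of x y] by (simp add: pref_def)

lemma suffix_last_merge: "xs \<noteq> [] \<Longrightarrow> suffix (last xs) (merge xs)"
  by (induction xs rule: merge.induct) (auto intro: suffix_appendI)

lemma prefix_hd_merge: "xs \<noteq> [] \<Longrightarrow> \<forall>e\<in>set xs. e \<noteq> [] \<Longrightarrow> prefix (hd xs) (merge xs)"
proof (induction xs rule: merge.induct)
  case (3 x y xs)
  then have "prefix y (merge (y # xs))"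
    by simp
  then have "prefix (take (ov x y) y) (merge (y # xs))"
    by (meson prefix_order.trans take_is_prefix)
  then have "prefix (pref x y @ take (ov x y) y) (pref x y @ merge (y # xs))"
    by simp
  then show ?case
    using pref_append_take_ov[of x y] 3 by simp
qed auto

lemma merge_all_Nil: "\<forall>e\<in>set xs. e = [] \<Longrightarrow> merge xs = []"
  by (induction xs rule: merge.induct) (auto simp: pref_def)

lemma merge_snoc:
  assumes "xs \<noteq> []" "\<forall>e\<in>set xs. e \<noteq> []" "y \<noteq> []"
  shows "merge (xs @ [y]) = merge xs @ drop (ov (last xs) y) y"
  using assms
proof (induction xs rule: merge.induct)
  case (2 x)
  have "pref x y @ take (ov x y) y = x"
    using pref_append_take_ov[of x y] 2 by simp
  then have "x @ drop (ov x y) y = pref x y @ y"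
    by (metis append.assoc append_take_drop_id)
  then show ?case
    by simp
qed auto

lemma rc_merge: "\<forall>e\<in>set p. e \<noteq> [] \<Longrightarrow> rc (merge p) = merge (rcseq p)"
proof (induction p rule: merge.induct)
  case (3 x y xs)
  have "rc (merge (x # y # xs)) = merge (rcseq (y # xs)) @ rc (pref x y)"
    using 3 by (simp add: rc_def)
  also have "rc (pref x y) = drop (ov x y) (rc x)"
    by (simp add: drop_rc pref_def)
  also have "merge (rcseq (y # xs)) @ drop (ov x y) (rc x) = merge (rcseq (y # xs) @ [rc x])"
    using 3 by (simp add: merge_snoc last_rcseq ov_rc)
  finally show ?case
    by (simp add: rcseq_def)
qed (auto simp: rcseq_def)

fun edges :: "'a list \<Rightarrow> ('a \<times> 'a) list" where
  "edges (x # y # xs) = (x, y) # edges (y # xs)"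
| "edges _ = []"

lemma edges_append:
  "A \<noteq> [] \<Longrightarrow> B \<noteq> [] \<Longrightarrow> edges (A @ B) = edges A @ (last A, hd B) # edges B"
proof (induction A)
  case (Cons x xs)
  then show ?case by (cases xs; cases B) auto
qed simp

lemma length_merge:
  "xs \<noteq> [] \<Longrightarrow> \<forall>e\<in>set xs. e \<noteq> [] \<Longrightarrow>
   length (merge xs) + (\<Sum>(x, y)\<leftarrow>edges xs. ov x y) = (\<Sum>x\<leftarrow>xs. length x)"
proof (induction xs rule: merge.induct)
  case (3 x y xs)
  then show ?case
    using ov_is_overlap(1)[of x y] by (simp add: length_pref)
qed auto

definition closing_edge_minimal :: "dna list \<Rightarrow> bool" where
  "closing_edge_minimal c \<longleftrightarrow> (\<forall>x y. (x, y) \<in> set (edges c) \<longrightarrow> ov (last c) (hd c) \<le> ov x y)"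

lemma length_merge_le_rotation:
  assumes "\<forall>e\<in>set c. e \<noteq> []" "closing_edge_minimal c" "0 < j" "j \<le> length c"
  shows "length (merge c) \<le> length (merge (drop j c @ take j c))"
proof (cases "j = length c")
  case False
  define A B where "A = take j c" and "B = drop j c"
  have AB: "A \<noteq> []" "B \<noteq> []" "c = A @ B"
    using assms(3,4) False by (auto simp: A_def B_def)
  have "(last A, hd B) \<in> set (edges c)"
    using AB by (simp add: edges_append)
  then have "ov (last B) (hd A) \<le> ov (last A) (hd B)"
    using assms(2) AB by (simp add: closing_edge_minimal_def)
  then have "(\<Sum>(x, y)\<leftarrow>edges (B @ A). ov x y) \<le> (\<Sum>(x, y)\<leftarrow>edges c. ov x y)"
    using AB by (simp add: edges_append)
  moreover have "length (merge c) + (\<Sum>(x, y)\<leftarrow>edges c. ov x y) = (\<Sum>x\<leftarrow>c. length x)"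
    using assms(1) AB by (intro length_merge) auto
  moreover have "length (merge (B @ A)) + (\<Sum>(x, y)\<leftarrow>edges (B @ A). ov x y) = (\<Sum>x\<leftarrow>c. length x)"
    using assms(1) AB by (subst length_merge) auto
  ultimately have "length (merge c) \<le> length (merge (B @ A))"
    by linarith
  then show ?thesis
    by (simp add: A_def B_def)
qed simp

section \<open>Occurrences inside merged strings\<close>

lemma drop_occurrence:
  assumes "M = u @ a @ w" "length u \<le> k" "k \<le> length u + length a"
  shows "drop k M = drop (k - length u) a @ w"
  using assms by simp

lemma sublist_if_nested_occurrence:
  assumes "M = u @ a @ w" "M = v @ c @ r"
    and "length u \<le> length v" "length v + length c \<le> length u + length a"
  shows "sublist c a"
proof -
  have "drop (length v) M = drop (length v - length u) a @ w"
    using assms(3,4) by (intro drop_occurrence[OF assms(1)]) simp_all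
  then have "take (length c) (c @ r) = take (length c) (drop (length v - length u) a @ w)"
    using assms(2) by simp
  then have "c = take (length c) (drop (length v - length u) a)"
    using assms(3,4) by simp
  then show ?thesis
    by (metis sublist_drop sublist_order.order_trans sublist_take)
qed

lemma ov_ge_overlapping_occurrences:
  assumes "M = u @ a @ w" "M = v @ c @ r"
    and "length u < length v" "length v \<le> length u + length a"
    and "length u + length a < length v + length c"
  shows "length u + length a - length v \<le> ov a c"
proof (rule ov_ge)
  define l where "l = length u + length a - length v"
  have "drop (length v) M = drop (length v - length u) a @ w"
    using assms(3,4) by (intro drop_occurrence[OF assms(1)]) simp_all
  then have "take l (c @ r) = take l (drop (length v - length u) a @ w)"
    using assms(2) by simp
  then show "drop (length a - l) a = take l c"
    using assms(3,4,5) by (simp add: l_def)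
  show "l < length a" "l < length c"
    using assms(3,4,5) by (simp_all add: l_def)
qed

lemma edge_overlapped_by_inner_occurrence:
  assumes "\<forall>e\<in>set q. e \<noteq> [] \<and> \<not> sublist a e \<and> \<not> sublist e a"
    and "merge q = u @ a @ w" "w \<noteq> []"
  shows "\<exists>x y. (x, y) \<in> set (edges q) \<and> ov x y < ov a y"
  using assms
proof (induction q arbitrary: u rule: merge.induct)
  case (2 b)
  then show ?case by auto
next
  case (3 b c rest)
  have bc: "b \<noteq> []" "c \<noteq> []"
    using "3.prems"(1) by auto
  define d where "d = length (pref b c)"
  have M: "merge (b # c # rest) = pref b c @ merge (c # rest)"
    by simp
  show ?case
  proof (cases "d \<le> length u")
    case True
    have "merge (c # rest) = drop d (merge (b # c # rest))"
      by (simp add: d_def)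
    also have "\<dots> = drop d u @ a @ w"
      using "3.prems"(2) True by simp
    finally obtain x y where "(x, y) \<in> set (edges (c # rest))" "ov x y < ov a y"
      using "3.IH" "3.prems"(1,3) by auto
    then show ?thesis by auto
  next
    case False
    obtain z where Mb: "merge (b # c # rest) = [] @ b @ z"
      using prefix_hd_merge[of "b # c # rest"] "3.prems"(1) by (auto simp: prefix_def)
    obtain r where Mc: "merge (b # c # rest) = pref b c @ c @ r"
      using prefix_hd_merge[of "c # rest"] "3.prems"(1) M by (auto simp: prefix_def)
    have ov_bc: "ov b c = length b - d" "d \<le> length b"
      using ov_is_overlap(1)[OF bc] bc by (simp_all add: d_def length_pref)
    have "length b < length u + length a"
    proof (rule ccontr)
      assume "\<not> ?thesis"
      then have "sublist a b"
        using sublist_if_nested_occurrence[OF Mb "3.prems"(2)] by simp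
      then show False using "3.prems"(1) by simp
    qed
    moreover have "length u + length a < d + length c"
    proof (rule ccontr)
      assume "\<not> ?thesis"
      then have "sublist c a"
        using sublist_if_nested_occurrence[OF "3.prems"(2) Mc] False by (simp add: d_def)
      then show False using "3.prems"(1) by simp
    qed
    ultimately have "length u + length a - d \<le> ov a c"
      using ov_ge_overlapping_occurrences[OF "3.prems"(2) Mc] False ov_bc by (simp add: d_def)
    moreover have "ov b c < length u + length a - d"
      using ov_bc \<open>length b < length u + length a\<close> by simp
    ultimately show ?thesis
      by (intro exI[of _ b] exI[of _ c]) simp
  qed
qed auto

lemma ov_merge_less_length_last:
  assumes p: "p \<noteq> []" "last p \<noteq> []" and q: "q \<noteq> []"
    and incomparable: "\<forall>e\<in>set q. e \<noteq> [] \<and> \<not> sublist (last p) e \<and> \<not> sublist e (last p)"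
    and dominated: "\<forall>x y. (x, y) \<in> set (edges q) \<longrightarrow> ov (last p) y \<le> ov x y"
  shows "ov (merge p) (merge q) < length (last p)"
proof -
  define A B k where "A = merge p" and "B = merge q" and "k = ov A B"
  obtain A0 where A: "A = A0 @ last p"
    using suffix_last_merge[OF p(1)] by (auto simp: suffix_def A_def)
  have "\<forall>e\<in>set q. e \<noteq> []"
    using incomparable by blast
  then have "prefix (hd q) B"
    unfolding B_def using prefix_hd_merge q by blast
  then have "A \<noteq> []" "B \<noteq> []"
    using A p(2) q \<open>\<forall>e\<in>set q. e \<noteq> []\<close> by (auto simp: prefix_def)
  then have k: "k < length B" "drop (length A - k) A = take k B"
    unfolding k_def by (fact ov_is_overlap)+
  have "k < length (last p)"
  proof (rule ccontr)
    assume "\<not> ?thesis"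
    then have "take k B = drop (length A - k) A0 @ last p"
      using k(2) A by simp
    then have "merge q = drop (length A - k) A0 @ last p @ drop k B"
      unfolding B_def by (metis append.assoc append_take_drop_id)
    moreover have "drop k B \<noteq> []"
      using k(1) by simp
    ultimately obtain x y where "(x, y) \<in> set (edges q)" "ov x y < ov (last p) y"
      using edge_overlapped_by_inner_occurrence[OF incomparable] by blast
    then show False
      using dominated by (meson leD)
  qed
  then show ?thesis
    by (simp add: k_def A_def B_def)
qed

lemma ov_merge_le_ov_last_hd:
  assumes "p \<noteq> []" "q \<noteq> []" "last p \<noteq> []" "\<forall>e\<in>set q. e \<noteq> []"
    and "ov (merge p) (merge q) < length (last p)" "ov (merge p) (merge q) < length (hd q)"
  shows "ov (merge p) (merge q) \<le> ov (last p) (hd q)"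
proof -
  define A B k where "A = merge p" and "B = merge q" and "k = ov A B"
  obtain A0 where A: "A = A0 @ last p"
    using suffix_last_merge[OF assms(1)] by (auto simp: suffix_def A_def)
  obtain B0 where B: "B = hd q @ B0"
    using prefix_hd_merge[OF assms(2,4)] by (auto simp: prefix_def B_def)
  have "A \<noteq> []" "B \<noteq> []"
    using A B assms(2,3,4) by auto
  then have "drop (length A - k) A = take k B"
    unfolding k_def by (fact ov_is_overlap)
  moreover have "k < length (last p)" "k < length (hd q)"
    using assms(5,6) by (simp_all add: k_def A_def B_def)
  ultimately have "drop (length (last p) - k) (last p) = take k (hd q)"
    using A B by simp
  then have "k \<le> ov (last p) (hd q)"
    using \<open>k < length (last p)\<close> \<open>k < length (hd q)\<close> by (rule ov_ge[rotated 2])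
  then show ?thesis
    by (simp add: k_def A_def B_def)
qed

section \<open>An invariant of MGREEDY-RC\<close>

definition rc_closed_antichain :: "dna set \<Rightarrow> bool" where
  "rc_closed_antichain V \<longleftrightarrow> (\<forall>a\<in>V. \<forall>b\<in>V. a \<noteq> b \<longrightarrow> \<not> sublist a b) \<and> (\<forall>s\<in>V. rc s \<in> V)"

lemma rc_closed_antichain_incomparable:
  "rc_closed_antichain V \<Longrightarrow> a \<in> V \<Longrightarrow> b \<in> V \<Longrightarrow> a \<noteq> b \<Longrightarrow> \<not> sublist a b \<and> \<not> sublist b a"
  unfolding rc_closed_antichain_def by metis

lemma rc_closed_antichain_Nil:
  "rc_closed_antichain V \<Longrightarrow> [] \<in> V \<Longrightarrow> a \<in> V \<Longrightarrow> a = []"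
  using rc_closed_antichain_incomparable by blast

lemma cycle_merge_le_rotation:
  assumes "rc_closed_antichain V" "set c \<subseteq> V" "closing_edge_minimal c" "0 < j" "j \<le> length c"
  shows "length (merge c) \<le> length (merge (drop j c @ take j c))"
proof (cases "[] \<in> V")
  case True
  then have "\<forall>e\<in>set c. e = []"
    using assms(1,2) rc_closed_antichain_Nil by blast
  then show ?thesis
    by (simp add: merge_all_Nil)
next
  case False
  then show ?thesis
    using assms by (intro length_merge_le_rotation) auto
qed

locale mg_invariant =
  fixes V :: "dna set" and Q :: "dna list set" and cs :: "dna list list"
  assumes path_nonempty: "X \<in> Q \<Longrightarrow> X \<noteq> []"
    and path_subset: "X \<in> Q \<Longrightarrow> set X \<subseteq> V"
    and path_rcseq: "X \<in> Q \<Longrightarrow> rcseq X \<in> Q"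
    and paths_disjoint: "X \<in> Q \<Longrightarrow> Y \<in> Q \<Longrightarrow> Y \<noteq> X \<Longrightarrow> Y \<noteq> rcseq X \<Longrightarrow> set X \<inter> set Y = {}"
    and edge_beats_last: "X \<in> Q \<Longrightarrow> (x, y) \<in> set (edges X) \<Longrightarrow> Y \<in> Q \<Longrightarrow>
      last Y \<notin> set X \<union> rc ` set X \<Longrightarrow> ov (last Y) y \<le> ov x y"
    and edge_beats_allowed: "X \<in> Q \<Longrightarrow> (x, y) \<in> set (edges X) \<Longrightarrow> allowed Q P R \<Longrightarrow>
      ov (last P) (hd R) \<le> ov x y"
    and cycle_subset: "c \<in> set cs \<Longrightarrow> set c \<subseteq> V"
    and cycle_closing_edge_minimal: "c \<in> set cs \<Longrightarrow> closing_edge_minimal c"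
begin

lemma path_vertex_notin:
  assumes "X \<in> Q" "Y \<in> Q" "Y \<noteq> X" "Y \<noteq> rcseq X" "x \<in> set X"
  shows "x \<notin> set Y \<union> rc ` set Y"
proof -
  have "set X \<inter> set Y = {}"
    using paths_disjoint assms(1-4) .
  moreover have "set X \<inter> set (rcseq Y) = {}"
    using paths_disjoint[OF assms(1) path_rcseq[OF assms(2)]] assms(3,4)
    by (simp add: rcseq_eq_iff_swap)
  ultimately show ?thesis
    using assms(5) by auto
qed

lemma invariant_after_self:
  assumes "maximal_pair Q p p"
  shows "mg_invariant V (Q - {p, rcseq p}) (cs @ [p])"
proof -
  have allowed: "allowed Q p p" and p_in: "p \<in> Q"
    using assms by (auto simp: maximal_pair_def allowed_def)
  show ?thesis
  proof unfold_locales
    fix X assume "X \<in> Q - {p, rcseq p}"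
    then show "X \<noteq> []" "set X \<subseteq> V" "rcseq X \<in> Q - {p, rcseq p}"
      using path_nonempty path_subset path_rcseq by (auto simp: rcseq_eq_iff_swap)
  next
    fix X Y assume "X \<in> Q - {p, rcseq p}" "Y \<in> Q - {p, rcseq p}" "Y \<noteq> X" "Y \<noteq> rcseq X"
    then show "set X \<inter> set Y = {}"
      using paths_disjoint by blast
  next
    fix X x y Y assume "X \<in> Q - {p, rcseq p}" "(x, y) \<in> set (edges X)" "Y \<in> Q - {p, rcseq p}"
      "last Y \<notin> set X \<union> rc ` set X"
    then show "ov (last Y) y \<le> ov x y"
      using edge_beats_last by blast
  next
    fix X x y P R assume "X \<in> Q - {p, rcseq p}" "(x, y) \<in> set (edges X)"
      "allowed (Q - {p, rcseq p}) P R"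
    then show "ov (last P) (hd R) \<le> ov x y"
      using edge_beats_allowed by (auto simp: allowed_def)
  next
    fix c assume "c \<in> set (cs @ [p])"
    then show "set c \<subseteq> V" "closing_edge_minimal c"
      using cycle_subset cycle_closing_edge_minimal path_subset[OF p_in]
        edge_beats_allowed[OF p_in _ allowed]
      by (auto simp: closing_edge_minimal_def)
  qed
qed

end

locale join_step = mg_invariant +
  fixes p q :: "dna list"
  assumes antichain: "rc_closed_antichain V"
    and maximal: "maximal_pair Q p q"
    and p_neq_q: "p \<noteq> q"
begin

abbreviation joined :: "dna list set" where
  "joined \<equiv> (Q - {p, rcseq p, q, rcseq q}) \<union> {p @ q, rcseq (p @ q)}"

lemma p_in: "p \<in> Q" and q_in: "q \<in> Q" and q_neq_rcseq_p: "q \<noteq> rcseq p"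
  using maximal p_neq_q by (auto simp: maximal_pair_def allowed_def)

lemma p_nonempty: "p \<noteq> []" and q_nonempty: "q \<noteq> []"
  using path_nonempty p_in q_in by auto

lemma last_p_notin_q: "last p \<notin> set q \<union> rc ` set q"
  using path_vertex_notin[OF p_in q_in] p_neq_q q_neq_rcseq_p p_nonempty by auto

lemma hd_q_notin_p: "hd q \<notin> set p \<union> rc ` set p"
proof -
  have "p \<noteq> rcseq q"
    using q_neq_rcseq_p by auto
  then show ?thesis
    using path_vertex_notin[OF q_in p_in] p_neq_q q_nonempty by auto
qed

lemma last_p_in: "last p \<in> set p" "last p \<in> V" and hd_q_in: "hd q \<in> set q" "hd q \<in> V"
proof -
  show "last p \<in> set p" "hd q \<in> set q"
    using p_nonempty q_nonempty by simp_all
  then show "last p \<in> V" "hd q \<in> V"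
    using path_subset p_in q_in by blast+
qed

lemma Nil_notin_V: "[] \<notin> V"
proof
  assume "[] \<in> V"
  then have "hd q = []" "last p = []"
    using rc_closed_antichain_Nil[OF antichain] last_p_in hd_q_in by blast+
  then have "hd q = last p"
    by simp
  then show False
    using hd_q_notin_p p_nonempty by simp
qed

lemma vertex_nonempty: "X \<in> Q \<Longrightarrow> e \<in> set X \<Longrightarrow> e \<noteq> []"
  using path_subset Nil_notin_V by blast

lemma p_vertices_nonempty: "\<forall>e\<in>set p. e \<noteq> []" and q_vertices_nonempty: "\<forall>e\<in>set q. e \<noteq> []"
  using vertex_nonempty p_in q_in by blast+

lemma q_incomparable_last_p:
  "\<forall>e\<in>set q. e \<noteq> [] \<and> \<not> sublist (last p) e \<and> \<not> sublist e (last p)"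
proof
  fix e assume "e \<in> set q"
  then have "e \<in> V" "e \<noteq> last p" "e \<noteq> []"
    using path_subset[OF q_in] last_p_notin_q q_vertices_nonempty by auto
  then show "e \<noteq> [] \<and> \<not> sublist (last p) e \<and> \<not> sublist e (last p)"
    using rc_closed_antichain_incomparable[OF antichain last_p_in(2)] by blast
qed

lemma rcseq_p_incomparable_rc_hd_q:
  "\<forall>e\<in>set (rcseq p). e \<noteq> [] \<and> \<not> sublist (rc (hd q)) e \<and> \<not> sublist e (rc (hd q))"
proof
  fix e assume "e \<in> set (rcseq p)"
  then obtain e0 where e0: "e = rc e0" "e0 \<in> set p"
    by auto
  then have "e0 \<in> V" "e0 \<noteq> hd q" "e0 \<noteq> []"
    using path_subset[OF p_in] hd_q_notin_p p_vertices_nonempty by auto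
  then show "e \<noteq> [] \<and> \<not> sublist (rc (hd q)) e \<and> \<not> sublist e (rc (hd q))"
    using rc_closed_antichain_incomparable[OF antichain hd_q_in(2)] e0(1) by auto
qed

text \<open>The second bound is the first one for the reverse complements of q and p.\<close>
lemma ov_merges_le_ov_ends: "ov (merge p) (merge q) \<le> ov (last p) (hd q)"
proof (rule ov_merge_le_ov_last_hd)
  show "ov (merge p) (merge q) < length (last p)"
  proof (rule ov_merge_less_length_last)
    show "\<forall>x y. (x, y) \<in> set (edges q) \<longrightarrow> ov (last p) y \<le> ov x y"
      using edge_beats_last[OF q_in _ p_in last_p_notin_q] by blast
  qed (use p_nonempty q_nonempty p_vertices_nonempty last_p_in(1) q_incomparable_last_p in auto)
  have "rc (hd q) \<notin> set p \<union> rc ` set p"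
    using hd_q_notin_p rc_in_image_rc_iff[of "rc (hd q)" "set p"] by auto
  then have "ov (merge (rcseq q)) (merge (rcseq p)) < length (rc (hd q))"
    using ov_merge_less_length_last[of "rcseq q" "rcseq p"] q_nonempty p_nonempty
      q_vertices_nonempty hd_q_in(1) rcseq_p_incomparable_rc_hd_q
      edge_beats_last[OF path_rcseq[OF p_in] _ path_rcseq[OF q_in]]
    by (auto simp: last_rcseq image_image)
  moreover have "ov (merge (rcseq q)) (merge (rcseq p)) = ov (merge p) (merge q)"
    using p_vertices_nonempty q_vertices_nonempty by (simp flip: rc_merge add: ov_rc)
  ultimately show "ov (merge p) (merge q) < length (hd q)"
    by simp
qed (use p_nonempty q_nonempty last_p_in(1) p_vertices_nonempty q_vertices_nonempty in auto)

lemma greedy_bound: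
  assumes "allowed Q P R"
  shows "ov (last P) (hd R) \<le> ov (last p) (hd q)"
proof -
  have PR: "P \<in> Q" "R \<in> Q"
    using assms by (auto simp: allowed_def)
  then have "ov (last P) (hd R) \<le> ov (merge P) (merge R)"
    using path_nonempty vertex_nonempty
    by (intro ov_suffix_prefix_le suffix_last_merge prefix_hd_merge) auto
  also have "\<dots> \<le> ov (merge p) (merge q)"
    using maximal assms by (auto simp: maximal_pair_def)
  also have "\<dots> \<le> ov (last p) (hd q)"
    by (rule ov_merges_le_ov_ends)
  finally show ?thesis .
qed

lemma joined_edges:
  assumes "X \<in> joined" "(x, y) \<in> set (edges X)"
  obtains (old) X0 where "X0 \<in> Q" "set X0 \<subseteq> set X" "(x, y) \<in> set (edges X0)"
    | (new) "X = p @ q" "x = last p" "y = hd q"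
    | (new_rc) "X = rcseq (p @ q)" "x = rc (hd q)" "y = rc (last p)"
proof -
  consider "X = p @ q" | "X = rcseq q @ rcseq p" | "X \<in> Q"
    using assms(1) by (auto simp: rcseq_append)
  then show thesis
  proof cases
    case 1
    then have "(x, y) \<in> set (edges p) \<or> (x, y) = (last p, hd q) \<or> (x, y) \<in> set (edges q)"
      using assms(2) p_nonempty q_nonempty by (auto simp: edges_append)
    then show thesis
      using old[OF p_in] old[OF q_in] new 1 by auto
  next
    case 2
    then have "(x, y) \<in> set (edges (rcseq q)) \<or> (x, y) = (rc (hd q), rc (last p)) \<or>
        (x, y) \<in> set (edges (rcseq p))"
      using assms(2) p_nonempty q_nonempty by (auto simp: edges_append last_rcseq hd_rcseq)
    then show thesis
      using old[OF path_rcseq[OF p_in]] old[OF path_rcseq[OF q_in]] new_rc 2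
      by (auto simp: rcseq_append)
  next
    case 3
    then show thesis
      using old assms(2) by blast
  qed
qed

lemma joined_last: "Y \<in> joined \<Longrightarrow> \<exists>Y0\<in>Q. last Y = last Y0"
  using q_in path_rcseq[OF p_in] p_nonempty q_nonempty by (auto simp: rcseq_append)

lemma allowed_joined:
  assumes "allowed joined P' R'"
  obtains P R where "allowed Q P R" "last P = last P'" "hd R = hd R'"
proof
  define P where "P = (if P' = p @ q then q else if P' = rcseq (p @ q) then rcseq p else P')"
  define R where "R = (if R' = p @ q then p else if R' = rcseq (p @ q) then rcseq q else R')"
  show "last P = last P'" "hd R = hd R'"
    using p_nonempty q_nonempty by (auto simp: P_def R_def rcseq_append)
  have "P \<in> Q" "R \<in> Q"
    using assms p_in q_in path_rcseq by (auto simp: allowed_def P_def R_def)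
  moreover have "P = R \<or> rcseq P \<noteq> R"
  proof (cases "P' = R'")
    case True
    then show ?thesis
      using q_neq_rcseq_p by (auto simp: P_def R_def)
  next
    case False
    then have "rcseq P' \<noteq> R'" "P' \<in> joined" "R' \<in> joined"
      using assms by (auto simp: allowed_def)
    then show ?thesis
      using p_neq_q q_neq_rcseq_p by (auto simp: P_def R_def rcseq_eq_iff_swap)
  qed
  ultimately show "allowed Q P R"
    by (auto simp: allowed_def)
qed

lemma joined_path_nonempty: "X \<in> joined \<Longrightarrow> X \<noteq> []"
  using p_nonempty path_nonempty by (auto simp: rcseq_append)

lemma joined_path_subset:
  assumes "X \<in> joined"
  shows "set X \<subseteq> V"
proof -
  have "set (p @ q) \<subseteq> V" "set (rcseq (p @ q)) \<subseteq> V"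
    using path_subset[OF p_in] path_subset[OF q_in]
      path_subset[OF path_rcseq[OF p_in]] path_subset[OF path_rcseq[OF q_in]]
    by (simp_all add: rcseq_append)
  then show ?thesis
    using assms path_subset by blast
qed

lemma joined_path_rcseq: "X \<in> joined \<Longrightarrow> rcseq X \<in> joined"
  using path_rcseq by (auto simp: rcseq_eq_iff_swap)

lemma joined_disjoint:
  assumes "X \<in> joined" "Y \<in> joined" "Y \<noteq> X" "Y \<noteq> rcseq X"
  shows "set X \<inter> set Y = {}"
proof -
  have new_old: "set Z \<inter> set W = {}"
    if "Z \<in> {p @ q, rcseq (p @ q)}" "W \<in> Q - {p, rcseq p, q, rcseq q}" for Z W
  proof -
    have "set W \<inter> (set p \<union> rc ` set p \<union> set q \<union> rc ` set q) = {}"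
      using path_vertex_notin[of W p] path_vertex_notin[of W q] that(2) p_in q_in
      by (fastforce simp: rcseq_eq_iff_swap)
    then show ?thesis
      using that(1) by (auto simp: rcseq_append)
  qed
  show ?thesis
  proof (cases "X \<in> {p @ q, rcseq (p @ q)}"; cases "Y \<in> {p @ q, rcseq (p @ q)}")
    assume "X \<in> {p @ q, rcseq (p @ q)}" "Y \<in> {p @ q, rcseq (p @ q)}"
    then show ?thesis
      using assms(3,4) by auto
  next
    assume "X \<in> {p @ q, rcseq (p @ q)}" "Y \<notin> {p @ q, rcseq (p @ q)}"
    then show ?thesis
      using new_old assms(2) by blast
  next
    assume "X \<notin> {p @ q, rcseq (p @ q)}" "Y \<in> {p @ q, rcseq (p @ q)}"
    then show ?thesis
      using new_old assms(1) by blast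
  next
    assume "X \<notin> {p @ q, rcseq (p @ q)}" "Y \<notin> {p @ q, rcseq (p @ q)}"
    then show ?thesis
      using paths_disjoint assms by blast
  qed
qed

lemma joined_edge_beats_last:
  assumes X: "X \<in> joined" and e: "(x, y) \<in> set (edges X)" and Y: "Y \<in> joined"
    and notin: "last Y \<notin> set X \<union> rc ` set X"
  shows "ov (last Y) y \<le> ov x y"
proof -
  obtain Y0 where Y0: "Y0 \<in> Q" "last Y = last Y0"
    using joined_last Y by blast
  from X e show ?thesis
  proof (cases rule: joined_edges)
    case (old X0)
    then have "last Y0 \<notin> set X0 \<union> rc ` set X0"
      using notin Y0(2) by auto
    then show ?thesis
      using edge_beats_last[OF old(1,3) Y0(1)] Y0(2) by simp
  next
    case new
    have "Y0 \<noteq> q"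
      using notin Y0 new q_nonempty by auto
    moreover have "Y0 \<noteq> rcseq q"
      using notin Y0 new q_nonempty by (auto simp: last_rcseq)
    ultimately have "allowed Q Y0 q"
      using Y0(1) q_in by (auto simp: allowed_def rcseq_eq_iff_swap)
    then show ?thesis
      using greedy_bound new Y0(2) by simp
  next
    case new_rc
    have "Y0 \<noteq> rcseq p"
      using notin Y0 new_rc p_nonempty by (auto simp: last_rcseq rcseq_append)
    moreover have "Y0 \<noteq> p"
      using notin Y0 new_rc p_nonempty by (auto simp: rcseq_append image_Un image_image)
    ultimately have "allowed Q p (rcseq Y0)"
      using Y0(1) p_in path_rcseq by (auto simp: allowed_def rcseq_eq_iff_swap)
    then have "ov (last p) (hd (rcseq Y0)) \<le> ov (last p) (hd q)"
      by (rule greedy_bound)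
    then have "ov (last p) (rc (last Y)) \<le> ov (last p) (hd q)"
      using Y0(2) path_nonempty[OF Y0(1)] by (simp add: hd_rcseq)
    then show ?thesis
      using new_rc ov_rc[of "rc (last p)" "last Y"] ov_rc[of "hd q" "last p"] by simp
  qed
qed

lemma joined_edge_beats_allowed:
  assumes X: "X \<in> joined" and e: "(x, y) \<in> set (edges X)" and PR: "allowed joined P' R'"
  shows "ov (last P') (hd R') \<le> ov x y"
proof -
  obtain P R where allowed: "allowed Q P R" and ends: "last P = last P'" "hd R = hd R'"
    using allowed_joined PR by blast
  from X e show ?thesis
  proof (cases rule: joined_edges)
    case old
    then show ?thesis
      using edge_beats_allowed[OF _ _ allowed] ends by simp
  next
    case new
    then show ?thesis
      using greedy_bound[OF allowed] ends by simp
  next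
    case new_rc
    then show ?thesis
      using greedy_bound[OF allowed] ends ov_rc[of "hd q" "last p"] by simp
  qed
qed

lemma invariant_after_join: "mg_invariant V joined cs"
  by (rule mg_invariant.intro[OF joined_path_nonempty joined_path_subset joined_path_rcseq
      joined_disjoint joined_edge_beats_last joined_edge_beats_allowed
      cycle_subset cycle_closing_edge_minimal])

end

lemma mg_invariant_init:
  assumes "rc_closed_antichain V"
  shows "mg_invariant V ((\<lambda>s. [s]) ` V) []"
proof unfold_locales
  fix X assume "X \<in> (\<lambda>s. [s]) ` V"
  then show "X \<noteq> []" "set X \<subseteq> V" "rcseq X \<in> (\<lambda>s. [s]) ` V"
    using assms by (auto simp: rc_closed_antichain_def rcseq_def)
qed auto

lemma mg_invariant_step:
  assumes "rc_closed_antichain V" "mg_step (Q, cs) (Q', cs')" "mg_invariant V Q cs"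
  shows "mg_invariant V Q' cs'"
  using assms(2)
proof cases
  case (self p)
  then show ?thesis
    using mg_invariant.invariant_after_self[OF assms(3)] by simp
next
  case (join p q)
  then interpret join_step V Q cs p q
    using assms unfolding join_step_def join_step_axioms_def by blast
  show ?thesis
    using invariant_after_join join by simp
qed

lemma scs_rc_instance_antichain: "scs_rc_instance S \<Longrightarrow> rc_closed_antichain (S \<union> rc ` S)"
  by (auto simp: scs_rc_instance_def rc_closed_antichain_def)

lemma mg_invariant_run:
  assumes "scs_rc_instance S" "mgreedy_run S cs"
  shows "mg_invariant (S \<union> rc ` S) {} cs"
proof -
  note antichain = scs_rc_instance_antichain[OF assms(1)]
  have "mg_step\<^sup>*\<^sup>* (mg_init S, []) ({}, cs)"
    using assms(2) by (simp add: mgreedy_run_def)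
  moreover have "mg_invariant (S \<union> rc ` S) (mg_init S) []"
    using mg_invariant_init[OF antichain] by (simp add: mg_init_def)
  ultimately show ?thesis
    by (induction rule: rtranclp_induct2) (auto intro: mg_invariant_step[OF antichain])
qed

theorem lemma16:
  fixes S :: "dna set" and cs :: "dna list list" and x :: "dna list \<Rightarrow> dna"
  assumes "scs_rc_instance S"
    and "mgreedy_run S cs"
    and "\<forall>c \<in> set cs. xC_props c (x c)"
  shows "(\<Sum>c\<leftarrow>cs. length (merge c)) \<le> (\<Sum>c\<leftarrow>cs. length (x c))"
proof (rule sum_list_mono)
  interpret mg_invariant "S \<union> rc ` S" "{}" cs
    using mg_invariant_run[OF assms(1,2)] .
  note antichain = scs_rc_instance_antichain[OF assms(1)]
  fix c assume "c \<in> set cs"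
  then obtain j where j: "1 \<le> j" "j \<le> length c" "suffix (merge (drop j c @ take j c)) (x c)"
    using assms(3) unfolding xC_props_def by blast
  have "length (merge c) \<le> length (merge (drop j c @ take j c))"
    using cycle_merge_le_rotation[OF antichain] cycle_subset cycle_closing_edge_minimal \<open>c \<in> set cs\<close> j
    by simp
  also have "\<dots> \<le> length (x c)"
    using j(3) by (rule suffix_length_le)
  finally show "length (merge c) \<le> length (x c)" .
qed

end
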